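(* Let $L$ be a simple finite-dimensional Lie algebra over a field $K$ of characteristic different from $2$ and $3$. Then $C(L)=0$, i.e. every skew-symmetric bilinear form $\varphi:L\times L\to K$ satisfying $\varphi([x,y],z)=\varphi([z,x],y)$ for all $x,y,z\in L$ is zero. *)

theory Defs
  imports Main "HOL.Vector_Spaces"
begin

definition lie_algebra :: "('k::field \<Rightarrow> 'v::ab_group_add \<Rightarrow> 'v) \<Rightarrow> ('v \<Rightarrow> 'v \<Rightarrow> 'v) \<Rightarrow> bool" where
  "lie_algebra scale br \<longleftrightarrow>
     vector_space scale \<and>
     (\<forall>x. Vector_Spaces.linear scale scale (br x)) \<and>
     (\<forall>y. Vector_Spaces.linear scale scale (\<lambda>x. br x y)) \<and>
     (\<forall>x. br x x = 0) \<and>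
     (\<forall>x y z. br x (br y z) + br y (br z x) + br z (br x y) = 0)"

definition finite_dim :: "('k::field \<Rightarrow> 'v::ab_group_add \<Rightarrow> 'v) \<Rightarrow> bool" where
  "finite_dim scale \<longleftrightarrow> (\<exists>B. finite B \<and> module.span scale B = UNIV)"

definition lie_ideal :: "('k::field \<Rightarrow> 'v::ab_group_add \<Rightarrow> 'v) \<Rightarrow> ('v \<Rightarrow> 'v \<Rightarrow> 'v) \<Rightarrow> 'v set \<Rightarrow> bool" where
  "lie_ideal scale br I \<longleftrightarrow> module.subspace scale I \<and> (\<forall>x y. y \<in> I \<longrightarrow> br x y \<in> I)"

definition simple_lie_algebra :: "('k::field \<Rightarrow> 'v::ab_group_add \<Rightarrow> 'v) \<Rightarrow> ('v \<Rightarrow> 'v \<Rightarrow> 'v) \<Rightarrow> bool" where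
  "simple_lie_algebra scale br \<longleftrightarrow> lie_algebra scale br \<and>
     (\<exists>x y. br x y \<noteq> 0) \<and>
     (\<forall>I. lie_ideal scale br I \<longrightarrow> I = {0} \<or> I = UNIV)"

end

theory Submission
  imports Defs
begin

text \<open>If \<open>\<phi>\<close> is skew and cyclic, then \<open>\<phi>([x,y],z) = \<phi>(y,[x,z])\<close>, so every \<open>ad x\<close>
  is self-adjoint for \<open>\<phi>\<close>. But \<open>ad [a,b] = ad a ad b - ad b ad a\<close> is a commutator of
  self-adjoint operators, hence skew-adjoint; being both, it satisfies
  \<open>\<phi>(y,[[a,b],z]) = 0\<close> as \<open>2 \<noteq> 0\<close>. In a simple Lie algebra the brackets span \<open>L\<close>
  (their span is a nonzero ideal), so first \<open>\<phi>(y,[w,z]) = 0\<close> and then \<open>\<phi>(y,w) = 0\<close>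
  for all \<open>w\<close>.\<close>

locale lie_alg =
  fixes scale :: "'k::field \<Rightarrow> 'v::ab_group_add \<Rightarrow> 'v"
    and br :: "'v \<Rightarrow> 'v \<Rightarrow> 'v"
  assumes lie_algebra: "lie_algebra scale br"
begin

sublocale vector_space scale
  using lie_algebra unfolding lie_algebra_def by blast

lemma bracket_linear_right: "module_hom scale scale (br x)"
  using lie_algebra by (simp add: lie_algebra_def linear_iff_module_hom)

lemma bracket_linear_left: "module_hom scale scale (\<lambda>x. br x y)"
  using lie_algebra by (simp add: lie_algebra_def linear_iff_module_hom)

lemma bracket_add_left: "br (a + b) y = br a y + br b y"
  using module_hom.add[OF bracket_linear_left] by simp

lemma bracket_add_right: "br x (a + b) = br x a + br x b"
  using module_hom.add[OF bracket_linear_right] .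

lemma bracket_scale_left: "br (scale c a) y = scale c (br a y)"
  using module_hom.scale[OF bracket_linear_left] by simp

lemma bracket_zero_left: "br 0 y = 0"
  using module_hom.zero[OF bracket_linear_left] by simp

lemma bracket_minus_right: "br x (- a) = - br x a"
  using module_hom.neg[OF bracket_linear_right] .

lemma bracket_self: "br x x = 0"
  using lie_algebra by (simp add: lie_algebra_def)

lemma jacobi: "br x (br y z) + br y (br z x) + br z (br x y) = 0"
  using lie_algebra by (simp add: lie_algebra_def)

lemma bracket_antisym: "br y x = - br x y"
proof -
  have "0 = br (x + y) (x + y)"
    by (simp add: bracket_self)
  also have "\<dots> = br x x + br y x + (br x y + br y y)"
    by (simp only: bracket_add_left bracket_add_right)
  also have "\<dots> = br x y + br y x"
    by (simp add: bracket_self)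
  finally show ?thesis
    by (simp add: eq_neg_iff_add_eq_0 add.commute)
qed

lemma bracket_bracket_left: "br (br a b) y = br a (br b y) - br b (br a y)"
proof -
  have "br (br a b) y = - br y (br a b)"
    by (rule bracket_antisym)
  also have "\<dots> = br a (br b y) + br b (br y a)"
    using jacobi[of a b y] by (simp add: neg_eq_iff_add_eq_0 ac_simps)
  also have "br b (br y a) = - br b (br a y)"
    by (simp add: bracket_antisym[of a y] bracket_minus_right)
  finally show ?thesis
    by simp
qed

definition derived_algebra :: "'v set" where
  "derived_algebra = span (range (case_prod br))"

lemma lie_ideal_derived_algebra: "lie_ideal scale br derived_algebra"
  unfolding lie_ideal_def derived_algebra_def by (auto intro: span_base)

lemma simple_derived_algebra_eq_UNIV:
  assumes "simple_lie_algebra scale br"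
  shows "derived_algebra = UNIV"
proof -
  obtain x y where "br x y \<noteq> 0"
    using assms by (auto simp: simple_lie_algebra_def)
  then have "derived_algebra \<noteq> {0}"
    unfolding derived_algebra_def by (metis case_prod_conv rangeI singletonD span_base)
  then show ?thesis
    using assms lie_ideal_derived_algebra by (auto simp: simple_lie_algebra_def)
qed

lemma subspace_eq_UNIV_if_brackets:
  assumes "derived_algebra = UNIV" and "subspace S" and "\<And>a b. br a b \<in> S"
  shows "S = UNIV"
proof -
  have "range (case_prod br) \<subseteq> S"
    using assms(3) by auto
  then have "derived_algebra \<subseteq> S"
    unfolding derived_algebra_def using assms(2) by (rule span_minimal)
  then show ?thesis
    using assms(1) by blast
qed

end

locale cyclic_skew_form = lie_alg scale br
  for scale :: "'k::field \<Rightarrow> 'v::ab_group_add \<Rightarrow> 'v"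
    and br :: "'v \<Rightarrow> 'v \<Rightarrow> 'v" +
  fixes \<phi> :: "'v \<Rightarrow> 'v \<Rightarrow> 'k"
  assumes linear_right: "Vector_Spaces.linear scale (*) (\<phi> x)"
    and skew: "\<phi> x y = - \<phi> y x"
    and cyclic: "\<phi> (br x y) z = \<phi> (br z x) y"
begin

lemma form_hom_right: "module_hom scale (*) (\<phi> x)"
  using linear_right by (simp add: linear_iff_module_hom)

lemma form_add_right: "\<phi> y (a + b) = \<phi> y a + \<phi> y b"
  using module_hom.add[OF form_hom_right] .

lemma form_diff_right: "\<phi> y (a - b) = \<phi> y a - \<phi> y b"
  using module_hom.diff[OF form_hom_right] .

lemma form_minus_right: "\<phi> y (- a) = - \<phi> y a"
  using module_hom.neg[OF form_hom_right] .

lemma form_scale_right: "\<phi> y (scale c a) = c * \<phi> y a"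
  using module_hom.scale[OF form_hom_right] .

lemma form_zero_right: "\<phi> y 0 = 0"
  using module_hom.zero[OF form_hom_right] .

lemma form_diff_left: "\<phi> (a - b) z = \<phi> a z - \<phi> b z"
  using skew[of "a - b" z] skew[of a z] skew[of b z] form_diff_right[of z a b] by simp

lemma form_bracket_adjoint: "\<phi> (br x y) z = \<phi> y (br x z)"
proof -
  have "\<phi> (br x y) z = \<phi> (br z x) y"
    by (rule cyclic)
  also have "\<dots> = - \<phi> y (br z x)"
    by (rule skew)
  also have "\<dots> = \<phi> y (br x z)"
    by (simp add: bracket_antisym[of x z] form_minus_right)
  finally show ?thesis .
qed

lemma form_bracket_bracket_eq_0:
  assumes "(2::'k) \<noteq> 0"
  shows "\<phi> y (br (br a b) z) = 0"
proof -
  have "\<phi> y (br (br a b) z) = \<phi> (br (br a b) y) z"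
    by (rule form_bracket_adjoint[symmetric])
  also have "\<dots> = \<phi> y (br b (br a z)) - \<phi> y (br a (br b z))"
    by (simp add: bracket_bracket_left form_diff_left form_bracket_adjoint)
  also have "\<dots> = - \<phi> y (br (br a b) z)"
    by (simp add: bracket_bracket_left form_diff_right)
  finally have "\<phi> y (br (br a b) z) + \<phi> y (br (br a b) z) = 0"
    by (simp only: eq_neg_iff_add_eq_0)
  then have "2 * \<phi> y (br (br a b) z) = 0"
    by (simp only: mult_2)
  then show ?thesis
    using assms by simp
qed

lemma form_eq_0_if_perfect:
  assumes "(2::'k) \<noteq> 0" and perfect: "derived_algebra = UNIV"
  shows "\<phi> y w = 0"
proof -
  have "subspace {w. \<forall>y z. \<phi> y (br w z) = 0}"
    by (auto simp: subspace_def bracket_zero_left bracket_add_left bracket_scale_left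
        form_zero_right form_add_right form_scale_right)
  then have "{w. \<forall>y z. \<phi> y (br w z) = 0} = UNIV"
    by (rule subspace_eq_UNIV_if_brackets[OF perfect]) (simp add: form_bracket_bracket_eq_0[OF assms(1)])
  moreover have "subspace {w. \<forall>y. \<phi> y w = 0}"
    by (auto simp: subspace_def form_zero_right form_add_right form_scale_right)
  ultimately have "{w. \<forall>y. \<phi> y w = 0} = UNIV"
    by (intro subspace_eq_UNIV_if_brackets[OF perfect]) auto
  then show ?thesis
    by blast
qed

end

theorem lemma1p4:
  fixes scale :: "'k::field \<Rightarrow> 'v::ab_group_add \<Rightarrow> 'v"
    and br :: "'v \<Rightarrow> 'v \<Rightarrow> 'v"
    and \<phi> :: "'v \<Rightarrow> 'v \<Rightarrow> 'k"
  assumes "simple_lie_algebra scale br"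
    and "finite_dim scale"
    and "(2::'k) \<noteq> 0" and "(3::'k) \<noteq> 0"
    and "\<forall>x. Vector_Spaces.linear scale (*) (\<phi> x)"
    and "\<forall>y. Vector_Spaces.linear scale (*) (\<lambda>x. \<phi> x y)"
    and "\<forall>x y. \<phi> x y = - \<phi> y x"
    and "\<forall>x y z. \<phi> (br x y) z = \<phi> (br z x) y"
  shows "\<forall>x y. \<phi> x y = 0"
proof -
  interpret lie_alg scale br
    using assms(1) by (simp add: lie_alg_def simple_lie_algebra_def)
  interpret cyclic_skew_form scale br \<phi>
    using assms(5,7,8)
    by (intro cyclic_skew_form.intro cyclic_skew_form_axioms.intro lie_alg_axioms) blast+
  show ?thesis
    using form_eq_0_if_perfect[OF assms(3) simple_derived_algebra_eq_UNIV[OF assms(1)]] by blast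
qed

end
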